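(* Let $n\ge2$, $s>\frac n2-1$ and $\max\{\frac38,\frac18n+\frac14-\frac14s\}<b'<\frac12$. Then there is a constant $C$ such that for all $(\xi,\tau)\in\mathbb{R}^{n}\times\mathbb{R}$, $$\Theta_1(\xi,\tau)=\int_{\mathbb{R}^{n+1}}\frac{\chi_{\{|\xi|\ge|\zeta|\}}(\zeta)\,(1+|\zeta|)^{-2s}}{(1+|\tau_1+\zeta^2|)^{2b'}(1+|\tau+\tau_1+(\xi+\zeta)^2|)^{2b'}}d\tau_1d\zeta\le C.$$
   Context: $\zeta\in\mathbb{R}^n$, $\tau_1\in\mathbb{R}$; $\zeta^2=|\zeta|^2$ and $(\xi+\zeta)^2=|\xi+\zeta|^2$; $\chi$ denotes a characteristic function. *)

theory Defs
  imports "HOL-Analysis.Analysis"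
begin

definition Theta1 :: "real \<Rightarrow> real \<Rightarrow> real ^ 'n \<Rightarrow> real \<Rightarrow> ennreal" where
  "Theta1 s b' \<xi> \<tau> =
     (\<integral>\<^sup>+ p. (case p of (\<zeta>, \<tau>\<^sub>1) \<Rightarrow>
        ennreal (indicator {\<zeta>'. norm \<zeta>' \<le> norm \<xi>} \<zeta> * (1 + norm \<zeta>) powr (- 2 * s)
          / ((1 + \<bar>\<tau>\<^sub>1 + (norm \<zeta>)\<^sup>2\<bar>) powr (2 * b')
             * (1 + \<bar>\<tau> + \<tau>\<^sub>1 + (norm (\<xi> + \<zeta>))\<^sup>2\<bar>) powr (2 * b'))))
      \<partial>(lborel :: ((real ^ 'n) \<times> real) measure))"

end

theory Submission
  imports Defs "HOL-Real_Asymp.Real_Asymp"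
begin

text \<open>
  Integrating in \<tau>1 first, the product of the weights (1 + |\<tau>1 + a|)^(-\<beta>) and
  (1 + |\<tau>1 + c|)^(-\<beta>), \<beta> = 2b', has integral O((1 + |a - c|)^(-\<alpha>)) with
  \<alpha> = 2\<beta> - 1 - \<epsilon>, and here a - c = -(\<tau> + |\<xi>|^2 + 2 \<xi>\<cdot>\<zeta>).
  What is left is an integral over the ball |\<zeta>| \<le> N = |\<xi>|. Pick a coordinate k with
  |\<xi>_k| \<ge> N / sqrt n and bound (1 + |\<zeta>|)^(-2s) by the product of (1 + |\<zeta>_j|)^(-p),
  p = 2s/(n-1), over the other coordinates. By Tonelli the k-th coordinate contributes
  O((1 + N)^(1-2\<alpha>)), because c + 2\<xi>_k\<zeta>_k runs over an interval of length about N^2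
  as \<zeta>_k runs over [-N, N], and each of the others O((1 + N)^q) for any q > 0 with
  q \<ge> 1 - p. Taking q (n-1) = 2\<alpha> - 1 makes the product bounded; the hypotheses on s and b'
  are exactly what is needed for such \<epsilon> and q to exist.
\<close>

lemma nn_integral_powr_atLeast0:
  fixes q :: real
  assumes q: "0 < q"
  shows "(\<integral>\<^sup>+x. ennreal ((1 + \<bar>x\<bar>) powr (-(1+q))) * indicator {0..} x \<partial>lborel) = ennreal (1/q)"
proof -
  have "(\<integral>\<^sup>+x. ennreal ((1 + \<bar>x\<bar>) powr (-(1+q))) * indicator {0..} x \<partial>lborel)
      = (\<integral>\<^sup>+x. ennreal ((1 + x) powr (-(1+q))) * indicator {0..} x \<partial>lborel)"
    by (intro nn_integral_cong) (auto split: split_indicator)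
  also have "\<dots> = ennreal (0 - (- ((1 + 0) powr (-q) / q)))"
  proof (rule nn_integral_FTC_atLeast)
    fix x :: real
    assume "0 \<le> x"
    then show "((\<lambda>x. - ((1 + x) powr (-q) / q)) has_real_derivative (1 + x) powr (-(1+q))) (at x)"
      using q by (auto intro!: derivative_eq_intros) (rule arg_cong[where f="\<lambda>e. (1+x) powr e"], simp)
  next
    show "((\<lambda>x::real. - ((1 + x) powr (-q) / q)) \<longlongrightarrow> 0) at_top"
      using q by real_asymp
  qed auto
  finally show ?thesis
    by simp
qed

lemma nn_integral_even_le:
  fixes g :: "real \<Rightarrow> real"
  assumes [measurable]: "g \<in> borel_measurable borel" and even: "\<And>x. g (-x) = g x"
  shows "(\<integral>\<^sup>+x. ennreal (g x) \<partial>lborel) \<le> 2 * (\<integral>\<^sup>+x. ennreal (g x) * indicator {0..} x \<partial>lborel)"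
proof -
  have "(\<integral>\<^sup>+x. ennreal (g x) \<partial>lborel)
      \<le> (\<integral>\<^sup>+x. ennreal (g x) * indicator {0..} x + ennreal (g x) * indicator {..0} x \<partial>lborel)"
    by (intro nn_integral_mono) (auto split: split_indicator)
  also have "\<dots> = (\<integral>\<^sup>+x. ennreal (g x) * indicator {0..} x \<partial>lborel)
      + (\<integral>\<^sup>+x. ennreal (g x) * indicator {..0} x \<partial>lborel)"
    by (intro nn_integral_add) auto
  also have "(\<integral>\<^sup>+x. ennreal (g x) * indicator {..0} x \<partial>lborel)
      = (\<integral>\<^sup>+x. ennreal (g (0 + (-1) * x)) * indicator {..0} (0 + (-1) * x) \<partial>lborel)"
    using nn_integral_real_affine[of "\<lambda>x. ennreal (g x) * indicator {..0} x" "-1" 0] by simp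
  also have "\<dots> = (\<integral>\<^sup>+x. ennreal (g x) * indicator {0..} x \<partial>lborel)"
    by (auto intro!: nn_integral_cong simp: even split: split_indicator)
  finally show ?thesis
    by (simp add: mult_2)
qed

lemma nn_integral_powr_shift_le:
  fixes q a :: real
  assumes q: "0 < q"
  shows "(\<integral>\<^sup>+x. ennreal ((1 + \<bar>x + a\<bar>) powr (-(1+q))) \<partial>lborel) \<le> ennreal (2/q)"
proof -
  have "(\<integral>\<^sup>+x. ennreal ((1 + \<bar>x + a\<bar>) powr (-(1+q))) \<partial>lborel)
      = (\<integral>\<^sup>+x. ennreal ((1 + \<bar>x\<bar>) powr (-(1+q))) \<partial>lborel)"
    using nn_integral_real_affine[of "\<lambda>x. ennreal ((1 + \<bar>x\<bar>) powr (-(1+q)))" 1 a]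
    by (simp add: add.commute)
  also have "\<dots> \<le> 2 * (\<integral>\<^sup>+x. ennreal ((1 + \<bar>x\<bar>) powr (-(1+q))) * indicator {0..} x \<partial>lborel)"
    by (rule nn_integral_even_le) auto
  also have "\<dots> = 2 * ennreal (1/q)"
    by (simp only: nn_integral_powr_atLeast0[OF q])
  also have "\<dots> = ennreal (2/q)"
    by (metis ennreal_mult' ennreal_numeral times_divide_eq_right mult_1_right zero_le_numeral)
  finally show ?thesis .
qed

lemma nn_integral_powr_Icc_le:
  fixes p q L :: real
  assumes q: "0 < q" "1 - p \<le> q" and L: "0 \<le> L"
  shows "(\<integral>\<^sup>+x. ennreal ((1 + \<bar>x\<bar>) powr (-p)) * indicator {-L..L} x \<partial>lborel)
    \<le> ennreal (2 * (1+L) powr q / q)"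
proof -
  have FTC: "(\<integral>\<^sup>+x. ennreal ((1 + x) powr (q - 1)) * indicator {0..L} x \<partial>lborel)
      = ennreal ((1+L) powr q / q - (1+0) powr q / q)"
  proof (rule nn_integral_FTC_Icc)
    fix x :: real
    assume "x \<in> {0..L}"
    then show "((\<lambda>x. (1 + x) powr q / q) has_real_derivative (1 + x) powr (q - 1)) (at x)"
      using q by (auto intro!: derivative_eq_intros)
  qed (use L in auto)
  have "(\<integral>\<^sup>+x. ennreal ((1 + \<bar>x\<bar>) powr (-p)) * indicator {-L..L} x \<partial>lborel)
      \<le> 2 * (\<integral>\<^sup>+x. ennreal ((1 + \<bar>x\<bar>) powr (-p) * indicator {-L..L} x) * indicator {0..} x \<partial>lborel)"
    using nn_integral_even_le[of "\<lambda>x. (1 + \<bar>x\<bar>) powr (-p) * indicator {-L..L} x"]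
    by (auto simp: ennreal_mult' ennreal_indicator split: split_indicator)
  also have "\<dots> \<le> 2 * (\<integral>\<^sup>+x. ennreal ((1 + x) powr (q - 1)) * indicator {0..L} x \<partial>lborel)"
    using q by (intro mult_left_mono nn_integral_mono)
      (auto split: split_indicator intro!: ennreal_leI powr_mono)
  also have "\<dots> = ennreal (2 * ((1+L) powr q / q - (1+0) powr q / q))"
    unfolding FTC by (subst ennreal_mult') auto
  also have "\<dots> \<le> ennreal (2 * (1+L) powr q / q)"
    using q by (intro ennreal_leI) simp
  finally show ?thesis .
qed

lemma inverse_powr_mult_le_powr_sum:
  fixes A B D \<alpha> \<beta> \<epsilon> :: real
  assumes A: "1 \<le> A" and B: "1 \<le> B" and D: "0 \<le> D" "1 + D \<le> A + B"
    and \<alpha>: "0 \<le> \<alpha>" "\<alpha> = 2*\<beta> - 1 - \<epsilon>" and \<beta>: "\<beta> < 1 + \<epsilon>"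
  shows "1 / (A powr \<beta> * B powr \<beta>)
    \<le> 2 powr \<alpha> * (1 + D) powr (-\<alpha>) * (A powr (-(1+\<epsilon>)) + B powr (-(1+\<epsilon>)))"
proof -
  define K where "K = 2 powr \<alpha> * (1 + D) powr (-\<alpha>)"
  have K: "0 \<le> K"
    by (simp add: K_def)
  \<comment> \<open>For X \<le> Y, the bound Y \<ge> (1 + D)/2 absorbs Y^(-\<alpha>) and Y \<ge> X the rest of Y^(-\<beta>).\<close>
  have main: "1 / (X powr \<beta> * Y powr \<beta>) \<le> K * X powr (-(1+\<epsilon>))"
    if X: "1 \<le> X" and XY: "X \<le> Y" and XYD: "1 + D \<le> X + Y" for X Y
  proof -
    define \<delta> where "\<delta> = \<beta> - \<alpha>"
    have \<delta>: "0 < \<delta>"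
      using \<alpha> \<beta> by (simp add: \<delta>_def)
    have "Y powr (-\<alpha>) \<le> ((1 + D) / 2) powr (-\<alpha>)"
      using D XY XYD \<alpha> by (intro powr_mono2') auto
    also have "\<dots> = K"
      using D by (simp add: K_def powr_divide powr_minus divide_simps)
    finally have Y\<alpha>: "Y powr (-\<alpha>) \<le> K" .
    have Y\<delta>: "Y powr (-\<delta>) \<le> X powr (-\<delta>)"
      using \<delta> XY X by (intro powr_mono2') auto
    have "1 / (X powr \<beta> * Y powr \<beta>) = X powr (-\<beta>) * (Y powr (-\<alpha>) * Y powr (-\<delta>))"
      by (simp add: powr_minus divide_simps \<delta>_def powr_add[symmetric] flip: powr_add)
    also have "\<dots> \<le> X powr (-\<beta>) * (K * X powr (-\<delta>))"
      using Y\<alpha> Y\<delta> K by (intro mult_left_mono mult_mono) auto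
    also have "\<dots> = K * (X powr (-\<beta>) * X powr (-\<delta>))"
      by (simp only: ac_simps)
    also have "X powr (-\<beta>) * X powr (-\<delta>) = X powr (-(1+\<epsilon>))"
      by (simp add: \<delta>_def \<alpha>(2) flip: powr_add)
    finally show ?thesis .
  qed
  have "K * A powr (-(1+\<epsilon>)) \<le> K * (A powr (-(1+\<epsilon>)) + B powr (-(1+\<epsilon>)))"
    and "K * B powr (-(1+\<epsilon>)) \<le> K * (A powr (-(1+\<epsilon>)) + B powr (-(1+\<epsilon>)))"
    using K by (intro mult_left_mono; simp)+
  moreover have "1 / (A powr \<beta> * B powr \<beta>) = 1 / (B powr \<beta> * A powr \<beta>)"
    by (simp add: mult.commute)
  ultimately show ?thesis
    using main[of A B] main[of B A] A B D unfolding K_def by linarith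
qed

lemma nn_integral_powr_product_le:
  fixes a c \<alpha> \<beta> \<epsilon> :: real
  assumes \<alpha>: "0 \<le> \<alpha>" "\<alpha> = 2*\<beta> - 1 - \<epsilon>" and \<beta>: "\<beta> < 1 + \<epsilon>" and \<epsilon>: "0 < \<epsilon>"
  shows "(\<integral>\<^sup>+t. ennreal (1 / ((1 + \<bar>t + a\<bar>) powr \<beta> * (1 + \<bar>t + c\<bar>) powr \<beta>)) \<partial>lborel)
    \<le> ennreal (2 powr \<alpha> * (4/\<epsilon>) * (1 + \<bar>a - c\<bar>) powr (-\<alpha>))"
proof -
  define K where "K = 2 powr \<alpha> * (1 + \<bar>a - c\<bar>) powr (-\<alpha>)"
  have K: "0 \<le> K"
    by (simp add: K_def)
  let ?f = "\<lambda>a t. (1 + \<bar>t + a\<bar>) powr (-(1+\<epsilon>))"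
  have "(\<integral>\<^sup>+t. ennreal (1 / ((1 + \<bar>t + a\<bar>) powr \<beta> * (1 + \<bar>t + c\<bar>) powr \<beta>)) \<partial>lborel)
      \<le> (\<integral>\<^sup>+t. ennreal K * ennreal (?f a t) + ennreal K * ennreal (?f c t) \<partial>lborel)"
  proof (intro nn_integral_mono)
    fix t :: real
    have "1 / ((1 + \<bar>t + a\<bar>) powr \<beta> * (1 + \<bar>t + c\<bar>) powr \<beta>) \<le> K * (?f a t + ?f c t)"
      unfolding K_def by (rule inverse_powr_mult_le_powr_sum[OF _ _ _ _ \<alpha> \<beta>]) auto
    then have "1 / ((1 + \<bar>t + a\<bar>) powr \<beta> * (1 + \<bar>t + c\<bar>) powr \<beta>) \<le> K * ?f a t + K * ?f c t"
      by (simp only: distrib_left)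
    then show "ennreal (1 / ((1 + \<bar>t + a\<bar>) powr \<beta> * (1 + \<bar>t + c\<bar>) powr \<beta>))
        \<le> ennreal K * ennreal (?f a t) + ennreal K * ennreal (?f c t)"
      using K by (simp add: ennreal_mult[symmetric] ennreal_plus[symmetric] del: ennreal_plus)
  qed
  also have "\<dots> = ennreal K * (\<integral>\<^sup>+t. ennreal (?f a t) \<partial>lborel) + ennreal K * (\<integral>\<^sup>+t. ennreal (?f c t) \<partial>lborel)"
    by (simp add: nn_integral_add nn_integral_cmult)
  also have "\<dots> \<le> ennreal K * ennreal (2/\<epsilon>) + ennreal K * ennreal (2/\<epsilon>)"
    by (intro add_mono mult_left_mono nn_integral_powr_shift_le \<epsilon>) auto
  also have "\<dots> = ennreal (K * (2/\<epsilon>) + K * (2/\<epsilon>))"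
    using K \<epsilon> by (simp add: ennreal_mult[symmetric] ennreal_plus[symmetric] del: ennreal_plus)
  also have "\<dots> = ennreal (2 powr \<alpha> * (4/\<epsilon>) * (1 + \<bar>a - c\<bar>) powr (-\<alpha>))"
    by (rule arg_cong[where f = ennreal]) (simp add: K_def field_simps)
  finally show ?thesis .
qed

lemma nn_integral_powr_affine_Icc_le:
  fixes a c N \<alpha> :: real
  assumes a: "a \<noteq> 0" and N: "0 \<le> N" and \<alpha>: "0 < \<alpha>" "\<alpha> < 1"
  shows "(\<integral>\<^sup>+y. ennreal ((1 + \<bar>c + a * y\<bar>) powr (-\<alpha>)) * indicator {-N..N} y \<partial>lborel)
    \<le> ennreal (2 * (1 + 2*\<bar>a\<bar>*N) powr (1-\<alpha>) / ((1-\<alpha>) * \<bar>a\<bar>) + 2*N * (1 + 2*\<bar>a\<bar>*N) powr (-\<alpha>))"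
proof -
  define R where "R = 2*\<bar>a\<bar>*N"
  have R: "0 \<le> R"
    using N by (simp add: R_def)
  let ?h = "\<lambda>z. ennreal ((1 + \<bar>z\<bar>) powr (-\<alpha>)) * indicator {-R..R} z"
  have rescale: "(\<integral>\<^sup>+y. ?h (c + a * y) \<partial>lborel) = ennreal (1/\<bar>a\<bar>) * (\<integral>\<^sup>+z. ?h z \<partial>lborel)"
  proof -
    have "ennreal (1/\<bar>a\<bar>) * (\<integral>\<^sup>+z. ?h z \<partial>lborel)
        = (ennreal (1/\<bar>a\<bar>) * ennreal \<bar>a\<bar>) * (\<integral>\<^sup>+y. ?h (c + a * y) \<partial>lborel)"
      using nn_integral_real_affine[of ?h a c] a by (simp add: mult.assoc)
    also have "ennreal (1/\<bar>a\<bar>) * ennreal \<bar>a\<bar> = 1"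
      using a by (simp flip: ennreal_mult)
    finally show ?thesis
      by simp
  qed
  \<comment> \<open>Where |c + a y| \<le> R, substitute z = c + a y; elsewhere the weight is at most (1 + R)^(-\<alpha>).\<close>
  have "(\<integral>\<^sup>+y. ennreal ((1 + \<bar>c + a * y\<bar>) powr (-\<alpha>)) * indicator {-N..N} y \<partial>lborel)
      \<le> (\<integral>\<^sup>+y. ?h (c + a * y) + ennreal ((1 + R) powr (-\<alpha>)) * indicator {-N..N} y \<partial>lborel)"
  proof (intro nn_integral_mono)
    fix y :: real
    show "ennreal ((1 + \<bar>c + a * y\<bar>) powr (-\<alpha>)) * indicator {-N..N} y
        \<le> ?h (c + a * y) + ennreal ((1 + R) powr (-\<alpha>)) * indicator {-N..N} y"
    proof (cases "\<bar>c + a * y\<bar> \<le> R")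
      case False
      then have "(1 + \<bar>c + a * y\<bar>) powr (-\<alpha>) \<le> (1 + R) powr (-\<alpha>)"
        using R \<alpha> by (intro powr_mono2') auto
      then show ?thesis
        by (auto split: split_indicator intro: ennreal_leI)
    qed (auto split: split_indicator)
  qed
  also have "\<dots> = (\<integral>\<^sup>+y. ?h (c + a * y) \<partial>lborel) + ennreal ((1 + R) powr (-\<alpha>)) * (2*N)"
    using N by (subst nn_integral_add) (auto simp: nn_integral_cmult_indicator)
  also have "\<dots> \<le> ennreal (1/\<bar>a\<bar>) * ennreal (2 * (1+R) powr (1-\<alpha>) / (1-\<alpha>))
      + ennreal ((1 + R) powr (-\<alpha>)) * (2*N)"
    unfolding rescale using \<alpha> R by (intro add_right_mono mult_left_mono nn_integral_powr_Icc_le) auto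
  also have "\<dots> = ennreal (2 * (1 + 2*\<bar>a\<bar>*N) powr (1-\<alpha>) / ((1-\<alpha>) * \<bar>a\<bar>)
      + 2*N * (1 + 2*\<bar>a\<bar>*N) powr (-\<alpha>))"
    using \<alpha> N R by (simp add: R_def ennreal_mult[symmetric] ennreal_plus[symmetric] mult.commute del: ennreal_plus)
  finally show ?thesis .
qed

lemma affine_Icc_bound_le_powr:
  fixes N w A \<alpha> :: real
  assumes N: "1 < N" and w: "1 \<le> w" and A: "2*N/w \<le> A" "A \<le> 2*N" and \<alpha>: "0 < \<alpha>" "\<alpha> < 1"
  shows "2 * (1 + 2*A*N) powr (1-\<alpha>) / ((1-\<alpha>) * A) + 2*N * (1 + 2*A*N) powr (-\<alpha>)
    \<le> (2 * w * 5 powr (1-\<alpha>) / (1-\<alpha>) + 2 * w powr \<alpha>) * (1+N) powr (1 - 2*\<alpha>)"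
proof -
  define M where "M = 1 + N"
  have M: "2 < M" "M \<le> 2*N"
    using N by (auto simp: M_def)
  have Aw: "2*N \<le> A * w"
    using A(1) w by (simp add: field_simps)
  have A0: "0 < A"
  proof -
    have "0 < A * w"
      using Aw N by linarith
    then show ?thesis
      using w by (simp add: zero_less_mult_iff)
  qed
  have M_sq: "M powr e * M powr e = M powr (2*e)" for e
    by (simp flip: powr_add)
  have "A * N \<le> (2*M) * M"
    using A(2) N by (intro mult_mono) (auto simp: M_def)
  moreover have "2 * M \<le> M * M"
    using M by (intro mult_right_mono) auto
  ultimately have "1 + 2*A*N \<le> 5 * (M * M)"
    using M by linarith
  then have "(1 + 2*A*N) powr (1-\<alpha>) \<le> (5 * (M * M)) powr (1-\<alpha>)"
    using \<alpha> A0 N by (intro powr_mono2) auto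
  also have "\<dots> = 5 powr (1-\<alpha>) * M powr (2 - 2*\<alpha>)"
    using M by (simp add: powr_mult M_sq algebra_simps)
  finally have T1: "(1 + 2*A*N) powr (1-\<alpha>) \<le> 5 powr (1-\<alpha>) * M powr (2 - 2*\<alpha>)" .
  have iA: "1 / A \<le> w / M"
    using Aw M A0 by (simp add: field_simps)
  have M_powr: "M powr (2 - 2*\<alpha>) = M * M powr (1 - 2*\<alpha>)" "M * M powr (-2*\<alpha>) = M powr (1 - 2*\<alpha>)"
    using M by (simp_all add: powr_mult_base)
  have "2 * (1 + 2*A*N) powr (1-\<alpha>) / ((1-\<alpha>) * A) = 2 / (1-\<alpha>) * (1 + 2*A*N) powr (1-\<alpha>) * (1/A)"
    by simp
  also have "\<dots> \<le> 2 / (1-\<alpha>) * (5 powr (1-\<alpha>) * M powr (2 - 2*\<alpha>)) * (w / M)"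
    using T1 iA \<alpha> A0 by (intro mult_mono) auto
  also have "\<dots> = 2 * w * 5 powr (1-\<alpha>) / (1-\<alpha>) * M powr (1 - 2*\<alpha>)"
    using M by (simp add: M_powr)
  finally have first: "2 * (1 + 2*A*N) powr (1-\<alpha>) / ((1-\<alpha>) * A)
      \<le> 2 * w * 5 powr (1-\<alpha>) / (1-\<alpha>) * M powr (1 - 2*\<alpha>)" .
  have "M * M \<le> (2*N) * (A*w)"
    using M Aw by (intro mult_mono) auto
  then have "M * M / w \<le> 1 + 2*A*N"
    using w by (simp add: field_simps)
  then have "(1 + 2*A*N) powr (-\<alpha>) \<le> (M * M / w) powr (-\<alpha>)"
    using \<alpha> M w by (intro powr_mono2') auto
  also have "\<dots> = w powr \<alpha> * M powr (-2*\<alpha>)"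
    using M w by (simp add: powr_divide powr_mult M_sq powr_minus divide_simps)
  finally have "2*N * (1 + 2*A*N) powr (-\<alpha>) \<le> 2*M * (w powr \<alpha> * M powr (-2*\<alpha>))"
    using N by (intro mult_mono) (auto simp: M_def)
  also have "\<dots> = 2 * w powr \<alpha> * M powr (1 - 2*\<alpha>)"
    by (simp flip: M_powr(2))
  finally show ?thesis
    using first by (simp add: M_def algebra_simps)
qed

lemma nn_integral_powr_affine_Icc_decay:
  fixes w \<alpha> :: real
  assumes w: "1 \<le> w" and \<alpha>: "1/2 \<le> \<alpha>" "\<alpha> < 1"
  obtains C where "\<And>N a c. 0 \<le> N \<Longrightarrow> 2*N/w \<le> \<bar>a\<bar> \<Longrightarrow> \<bar>a\<bar> \<le> 2*N \<Longrightarrow>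
    (\<integral>\<^sup>+y. ennreal ((1 + \<bar>c + a * y\<bar>) powr (-\<alpha>)) * indicator {-N..N} y \<partial>lborel)
      \<le> ennreal (C * (1+N) powr (1 - 2*\<alpha>))"
proof
  define C where "C = max 4 (2 * w * 5 powr (1-\<alpha>) / (1-\<alpha>) + 2 * w powr \<alpha>)"
  fix N a c :: real
  assume N: "0 \<le> N" and a: "2*N/w \<le> \<bar>a\<bar>" "\<bar>a\<bar> \<le> 2*N"
  let ?I = "\<integral>\<^sup>+y. ennreal ((1 + \<bar>c + a * y\<bar>) powr (-\<alpha>)) * indicator {-N..N} y \<partial>lborel"
  show "?I \<le> ennreal (C * (1+N) powr (1 - 2*\<alpha>))"
  proof (cases "N \<le> 1")
    case True
    have "(1 + \<bar>z\<bar>) powr (-\<alpha>) \<le> 1" for z :: real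
      using powr_mono[of "-\<alpha>" 0 "1 + \<bar>z\<bar>"] \<alpha> by (simp split: if_splits)
    then have "?I \<le> (\<integral>\<^sup>+y. indicator {-N..N} y \<partial>lborel)"
      by (intro nn_integral_mono) (auto split: split_indicator)
    also have "\<dots> = ennreal (2 * N)"
      using N by simp
    also have "\<dots> \<le> ennreal (4 * 2 powr (-1))"
      using True by (intro ennreal_leI) simp
    also have "\<dots> \<le> ennreal (C * (1+N) powr (1 - 2*\<alpha>))"
    proof (intro ennreal_leI mult_mono)
      have "2 powr (-1) \<le> 2 powr (1 - 2*\<alpha>)"
        using \<alpha> by (intro powr_mono) auto
      also have "\<dots> \<le> (1+N) powr (1 - 2*\<alpha>)"
        using \<alpha> N True by (intro powr_mono2') auto
      finally show "2 powr (-1) \<le> (1+N) powr (1 - 2*\<alpha>)" .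
    qed (auto simp: C_def)
    finally show ?thesis .
  next
    case False
    then have "a \<noteq> 0"
      using a w by (auto simp: field_simps)
    then have "?I \<le> ennreal (2 * (1 + 2*\<bar>a\<bar>*N) powr (1-\<alpha>) / ((1-\<alpha>) * \<bar>a\<bar>)
        + 2*N * (1 + 2*\<bar>a\<bar>*N) powr (-\<alpha>))"
      using N \<alpha> by (intro nn_integral_powr_affine_Icc_le) auto
    also have "\<dots> \<le> ennreal (C * (1+N) powr (1 - 2*\<alpha>))"
      using False w a \<alpha>
      by (intro ennreal_leI order_trans[OF affine_Icc_bound_le_powr] mult_right_mono) (auto simp: C_def)
    finally show ?thesis .
  qed
qed

lemma powr_norm_le_prod_Basis:
  fixes \<zeta> k :: "'a::euclidean_space" and p s :: real
  assumes k: "k \<in> Basis" and p: "0 \<le> p" and ps: "p * (real DIM('a) - 1) = 2 * s"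
  shows "(1 + norm \<zeta>) powr (- 2 * s) \<le> (\<Prod>b\<in>Basis-{k}. (1 + \<bar>\<zeta> \<bullet> b\<bar>) powr (-p))"
proof -
  have "(1 + norm \<zeta>) powr (- 2 * s) = (1 + norm \<zeta>) powr (real (DIM('a) - 1) * -p)"
    using ps by (simp add: of_nat_diff DIM_positive Suc_leI algebra_simps)
  also have "\<dots> = ((1 + norm \<zeta>) powr (-p)) ^ (DIM('a) - 1)"
    using norm_ge_zero[of \<zeta>] by (intro powr_power[symmetric]) linarith
  also have "\<dots> = (\<Prod>b\<in>Basis-{k}. (1 + norm \<zeta>) powr (-p))"
    using k by (simp add: card_Diff_singleton)
  also have "\<dots> \<le> (\<Prod>b\<in>Basis-{k}. (1 + \<bar>\<zeta> \<bullet> b\<bar>) powr (-p))"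
    using p by (intro prod_mono conjI powr_mono2') (auto simp: Basis_le_norm)
  finally show ?thesis .
qed

lemma ball_weight_le_coordinate_product:
  fixes \<zeta> k :: "'a::euclidean_space" and N s p h :: real
  assumes k: "k \<in> Basis" and p: "0 \<le> p" and ps: "p * (real DIM('a) - 1) = 2 * s" and h: "0 \<le> h"
  shows "ennreal (indicator {\<zeta>. norm \<zeta> \<le> N} \<zeta> * (1 + norm \<zeta>) powr (- 2 * s) * h)
    \<le> (\<Prod>b\<in>Basis-{k}. ennreal (indicator {-N..N} (\<zeta> \<bullet> b) * (1 + \<bar>\<zeta> \<bullet> b\<bar>) powr (-p)))
      * (ennreal h * indicator {-N..N} (\<zeta> \<bullet> k))"
proof (cases "norm \<zeta> \<le> N")
  case True
  have coord: "indicator {-N..N} (\<zeta> \<bullet> b) = (1::real)" if "b \<in> Basis" for b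
    using Basis_le_norm[OF that, of \<zeta>] True by (simp add: abs_le_iff)
  have "(1 + norm \<zeta>) powr (- 2 * s) * h \<le> (\<Prod>b\<in>Basis-{k}. (1 + \<bar>\<zeta> \<bullet> b\<bar>) powr (-p)) * h"
    using h by (intro mult_right_mono powr_norm_le_prod_Basis k p ps)
  moreover have "(\<Prod>b\<in>Basis-{k}. ennreal (indicator {-N..N} (\<zeta> \<bullet> b) * (1 + \<bar>\<zeta> \<bullet> b\<bar>) powr (-p)))
      = ennreal (\<Prod>b\<in>Basis-{k}. (1 + \<bar>\<zeta> \<bullet> b\<bar>) powr (-p))"
    by (subst prod_ennreal[symmetric]) (auto intro!: prod.cong simp: coord)
  ultimately show ?thesis
    using True h coord[OF k] by (simp add: indicator_def prod_nonneg ennreal_leI flip: ennreal_mult)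
qed simp

lemma nn_integral_coordinate_product_le:
  fixes \<xi> k :: "'a::euclidean_space" and g :: "real \<Rightarrow> real" and N p J Q :: real
  assumes k: "k \<in> Basis" and g[measurable]: "g \<in> borel_measurable borel"
    and J: "\<And>c. (\<integral>\<^sup>+y. ennreal (g (c + (\<xi> \<bullet> k) * y)) * indicator {-N..N} y \<partial>lborel) \<le> ennreal J"
    and Q: "(\<integral>\<^sup>+y. ennreal ((1 + \<bar>y\<bar>) powr (-p)) * indicator {-N..N} y \<partial>lborel) \<le> ennreal Q"
  shows "(\<integral>\<^sup>+x. (\<Prod>b\<in>Basis-{k}. ennreal (indicator {-N..N} (x b) * (1 + \<bar>x b\<bar>) powr (-p)))
      * (ennreal (g (\<Sum>b\<in>Basis. (\<xi> \<bullet> b) * x b)) * indicator {-N..N} (x k)) \<partial>(Pi\<^sub>M Basis (\<lambda>_. lborel)))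
    \<le> ennreal J * ennreal Q ^ (DIM('a) - 1)"
proof -
  interpret P: product_sigma_finite "\<lambda>_::'a. lborel::real measure"
    by (simp add: product_sigma_finite_def lborel.sigma_finite_measure_axioms)
  let ?P = "\<lambda>x. \<Prod>b\<in>Basis-{k}. ennreal (indicator {-N..N} (x b) * (1 + \<bar>x b\<bar>) powr (-p))"
  let ?\<Psi> = "\<lambda>x. ?P x * (ennreal (g (\<Sum>b\<in>Basis. (\<xi> \<bullet> b) * x b)) * indicator {-N..N} (x k))"
  have Basis_eq: "insert k (Basis-{k}) = (Basis::'a set)"
    using k by auto
  have "(\<integral>\<^sup>+x. ?\<Psi> x \<partial>(Pi\<^sub>M Basis (\<lambda>_. lborel)))
      = (\<integral>\<^sup>+x. (\<integral>\<^sup>+y. ?\<Psi> (x(k := y)) \<partial>lborel) \<partial>(Pi\<^sub>M (Basis-{k}) (\<lambda>_. lborel)))"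
  proof -
    have "?\<Psi> \<in> borel_measurable (Pi\<^sub>M (insert k (Basis-{k})) (\<lambda>_. lborel))"
      unfolding Basis_eq using k by measurable
    from P.product_nn_integral_insert[OF _ _ this] show ?thesis
      by (simp only: Basis_eq finite_Diff finite_Basis Diff_iff singleton_iff simp_thms)
  qed
  also have "\<dots> \<le> (\<integral>\<^sup>+x. ?P x * ennreal J \<partial>(Pi\<^sub>M (Basis-{k}) (\<lambda>_. lborel)))"
  proof (intro nn_integral_mono)
    fix x :: "'a \<Rightarrow> real"
    define c where "c = (\<Sum>b\<in>Basis-{k}. (\<xi> \<bullet> b) * x b)"
    have "?\<Psi> (x(k := y)) = ?P x * (ennreal (g (c + (\<xi> \<bullet> k) * y)) * indicator {-N..N} y)" for y
    proof -
      have "(\<Sum>b\<in>Basis. (\<xi> \<bullet> b) * (x(k := y)) b) = c + (\<xi> \<bullet> k) * y"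
        using k by (simp add: c_def sum.remove[OF finite_Basis k] add.commute)
      moreover have "?P (x(k := y)) = ?P x"
        by (intro prod.cong) auto
      ultimately show ?thesis
        by simp
    qed
    then have "(\<integral>\<^sup>+y. ?\<Psi> (x(k := y)) \<partial>lborel)
        = ?P x * (\<integral>\<^sup>+y. ennreal (g (c + (\<xi> \<bullet> k) * y)) * indicator {-N..N} y \<partial>lborel)"
      by (simp add: nn_integral_cmult)
    also have "\<dots> \<le> ?P x * ennreal J"
      by (intro mult_left_mono J) simp
    finally show "(\<integral>\<^sup>+y. ?\<Psi> (x(k := y)) \<partial>lborel) \<le> ?P x * ennreal J" .
  qed
  also have "\<dots> = (\<integral>\<^sup>+x. ?P x \<partial>(Pi\<^sub>M (Basis-{k}) (\<lambda>_. lborel))) * ennreal J"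
    by (rule nn_integral_multc) measurable
  also have "(\<integral>\<^sup>+x. ?P x \<partial>(Pi\<^sub>M (Basis-{k}) (\<lambda>_. lborel)))
      = (\<Prod>b\<in>Basis-{k}. (\<integral>\<^sup>+y. ennreal (indicator {-N..N} y * (1 + \<bar>y\<bar>) powr (-p)) \<partial>lborel))"
    by (rule P.product_nn_integral_prod) auto
  also have "\<dots> = (\<integral>\<^sup>+y. ennreal ((1 + \<bar>y\<bar>) powr (-p)) * indicator {-N..N} y \<partial>lborel) ^ (DIM('a) - 1)"
    using k by (simp add: card_Diff_singleton mult.commute ennreal_mult' ennreal_indicator)
  also have "\<dots> * ennreal J \<le> ennreal J * ennreal Q ^ (DIM('a) - 1)"
    by (subst mult.commute) (intro mult_left_mono power_mono Q; simp)
  finally show ?thesis .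
qed

lemma nn_integral_ball_weight_le:
  fixes \<xi> k :: "'a::euclidean_space" and g :: "real \<Rightarrow> real" and N s p J Q :: real
  assumes k: "k \<in> Basis" and p: "0 \<le> p" and ps: "p * (real DIM('a) - 1) = 2 * s"
    and g[measurable]: "g \<in> borel_measurable borel" and g_nonneg: "\<And>t. 0 \<le> g t"
    and J: "\<And>c. (\<integral>\<^sup>+y. ennreal (g (c + (\<xi> \<bullet> k) * y)) * indicator {-N..N} y \<partial>lborel) \<le> ennreal J"
    and Q: "(\<integral>\<^sup>+y. ennreal ((1 + \<bar>y\<bar>) powr (-p)) * indicator {-N..N} y \<partial>lborel) \<le> ennreal Q"
  shows "(\<integral>\<^sup>+\<zeta>. ennreal (indicator {\<zeta>. norm \<zeta> \<le> N} \<zeta> * (1 + norm \<zeta>) powr (- 2 * s) * g (\<xi> \<bullet> \<zeta>)) \<partial>lborel)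
    \<le> ennreal J * ennreal Q ^ (DIM('a) - 1)"
proof -
  let ?P = "\<lambda>x. \<Prod>b\<in>Basis-{k}. ennreal (indicator {-N..N} (x b) * (1 + \<bar>x b\<bar>) powr (-p))"
  let ?\<Psi> = "\<lambda>x. ?P x * (ennreal (g (\<Sum>b\<in>Basis. (\<xi> \<bullet> b) * x b)) * indicator {-N..N} (x k))"
  have "(\<integral>\<^sup>+\<zeta>. ennreal (indicator {\<zeta>. norm \<zeta> \<le> N} \<zeta> * (1 + norm \<zeta>) powr (- 2 * s) * g (\<xi> \<bullet> \<zeta>)) \<partial>lborel)
      = (\<integral>\<^sup>+x. ennreal (indicator {\<zeta>. norm \<zeta> \<le> N} (\<Sum>b\<in>Basis. x b *\<^sub>R b)
          * (1 + norm (\<Sum>b\<in>Basis. x b *\<^sub>R b)) powr (- 2 * s) * g (\<xi> \<bullet> (\<Sum>b\<in>Basis. x b *\<^sub>R b)))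
        \<partial>(Pi\<^sub>M Basis (\<lambda>_. lborel)))"
    by (subst lborel_eq[where 'a='a]) (simp add: nn_integral_distr)
  also have "\<dots> \<le> (\<integral>\<^sup>+x. ?\<Psi> x \<partial>(Pi\<^sub>M Basis (\<lambda>_. lborel)))"
  proof (intro nn_integral_mono)
    fix x :: "'a \<Rightarrow> real"
    define \<zeta> where "\<zeta> = (\<Sum>b\<in>Basis. x b *\<^sub>R b)"
    have coord: "\<zeta> \<bullet> b = x b" if "b \<in> Basis" for b
      using that by (simp add: \<zeta>_def inner_sum_left inner_Basis if_distrib sum.delta cong: if_cong)
    have "\<xi> \<bullet> \<zeta> = (\<Sum>b\<in>Basis. (\<xi> \<bullet> b) * x b)"
      by (simp add: \<zeta>_def inner_sum_right mult.commute)
    moreover have "?P x = (\<Prod>b\<in>Basis-{k}. ennreal (indicator {-N..N} (\<zeta> \<bullet> b) * (1 + \<bar>\<zeta> \<bullet> b\<bar>) powr (-p)))"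
      by (intro prod.cong) (auto simp: coord)
    ultimately show "ennreal (indicator {\<zeta>. norm \<zeta> \<le> N} (\<Sum>b\<in>Basis. x b *\<^sub>R b)
          * (1 + norm (\<Sum>b\<in>Basis. x b *\<^sub>R b)) powr (- 2 * s) * g (\<xi> \<bullet> (\<Sum>b\<in>Basis. x b *\<^sub>R b)))
        \<le> ?\<Psi> x"
      using ball_weight_le_coordinate_product[OF k p ps g_nonneg[of "\<xi> \<bullet> \<zeta>"], where \<zeta> = \<zeta> and N = N]
      by (simp add: \<zeta>_def[symmetric] coord[OF k])
  qed
  also have "\<dots> \<le> ennreal J * ennreal Q ^ (DIM('a) - 1)"
    by (rule nn_integral_coordinate_product_le[OF k g J Q])
  finally show ?thesis .
qed

lemma exists_Basis_norm_le_sqrt_DIM: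
  fixes \<xi> :: "'a::euclidean_space"
  obtains k where "k \<in> Basis" "norm \<xi> \<le> sqrt (real DIM('a)) * \<bar>\<xi> \<bullet> k\<bar>"
proof -
  let ?f = "\<lambda>b. \<bar>\<xi> \<bullet> b\<bar>"
  obtain k where k: "k \<in> Basis" and max: "?f k = Max (?f ` Basis)"
    using Max_in[of "?f ` Basis"] by fastforce
  have "(norm \<xi>)\<^sup>2 = (\<Sum>b\<in>Basis. (\<xi> \<bullet> b) * (\<xi> \<bullet> b))"
    by (simp add: power2_norm_eq_inner euclidean_inner[of \<xi> \<xi>])
  also have "\<dots> = (\<Sum>b\<in>Basis. (?f b)\<^sup>2)"
    by (simp add: power2_eq_square)
  also have "\<dots> \<le> (\<Sum>b\<in>(Basis::'a set). (?f k)\<^sup>2)"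
    using max by (intro sum_mono power_mono) auto
  also have "\<dots> = (sqrt (real DIM('a)) * ?f k)\<^sup>2"
    by (simp add: power_mult_distrib)
  finally show ?thesis
    using k that by (metis power2_le_imp_le abs_ge_zero mult_nonneg_nonneg real_sqrt_ge_zero of_nat_0_le_iff)
qed

definition Theta1_reduced :: "real \<Rightarrow> real \<Rightarrow> 'a::euclidean_space \<Rightarrow> real \<Rightarrow> ennreal" where
  "Theta1_reduced s \<alpha> \<xi> c =
     (\<integral>\<^sup>+\<zeta>. ennreal (indicator {\<zeta>. norm \<zeta> \<le> norm \<xi>} \<zeta> * (1 + norm \<zeta>) powr (- 2 * s)
        * (1 + \<bar>c + 2 * (\<xi> \<bullet> \<zeta>)\<bar>) powr (-\<alpha>)) \<partial>lborel)"

lemma Theta1_reduced_le_powr: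
  fixes \<xi> :: "'a::euclidean_space" and s \<alpha> p q C1 c :: real
  assumes p: "0 \<le> p" "p * (real DIM('a) - 1) = 2 * s" and q: "0 < q" "1 - p \<le> q"
    and C1: "\<And>N a c. 0 \<le> N \<Longrightarrow> 2*N / sqrt (real DIM('a)) \<le> \<bar>a\<bar> \<Longrightarrow> \<bar>a\<bar> \<le> 2*N \<Longrightarrow>
      (\<integral>\<^sup>+y. ennreal ((1 + \<bar>c + a * y\<bar>) powr (-\<alpha>)) * indicator {-N..N} y \<partial>lborel)
        \<le> ennreal (C1 * (1+N) powr (1 - 2*\<alpha>))"
  shows "Theta1_reduced s \<alpha> \<xi> c
    \<le> ennreal (C1 * (1 + norm \<xi>) powr (1 - 2*\<alpha>)) * ennreal (2 * (1 + norm \<xi>) powr q / q) ^ (DIM('a) - 1)"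
proof -
  define N where "N = norm \<xi>"
  obtain k where k: "k \<in> Basis" and N_le: "N \<le> sqrt (real DIM('a)) * \<bar>\<xi> \<bullet> k\<bar>"
    using exists_Basis_norm_le_sqrt_DIM unfolding N_def by blast
  have "2*N / sqrt (real DIM('a)) \<le> \<bar>2 * (\<xi> \<bullet> k)\<bar>"
    using N_le by (simp add: field_simps abs_mult)
  moreover have "\<bar>2 * (\<xi> \<bullet> k)\<bar> \<le> 2*N"
    using Basis_le_norm[OF k, of \<xi>] by (simp add: N_def abs_mult)
  ultimately have "(\<integral>\<^sup>+y. ennreal ((1 + \<bar>c + 2 * (c' + (\<xi> \<bullet> k) * y)\<bar>) powr (-\<alpha>)) * indicator {-N..N} y \<partial>lborel)
      \<le> ennreal (C1 * (1+N) powr (1 - 2*\<alpha>))" for c'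
    using C1[of N "2 * (\<xi> \<bullet> k)" "c + 2*c'"] by (simp add: N_def algebra_simps)
  moreover have "(\<integral>\<^sup>+y. ennreal ((1 + \<bar>y\<bar>) powr (-p)) * indicator {-N..N} y \<partial>lborel)
      \<le> ennreal (2 * (1+N) powr q / q)"
    using q by (intro nn_integral_powr_Icc_le) (auto simp: N_def)
  ultimately show ?thesis
    unfolding Theta1_reduced_def N_def by (intro nn_integral_ball_weight_le[OF k p]) auto
qed

lemma Theta1_reduced_bounded:
  fixes s \<alpha> :: real
  assumes d: "2 \<le> DIM('a::euclidean_space)" and s: "0 \<le> s"
    and \<alpha>: "1/2 < \<alpha>" "\<alpha> < 1" and s\<alpha>: "real DIM('a) \<le> 2 * s + 2 * \<alpha>"
  obtains C where "\<And>(\<xi>::'a) c. Theta1_reduced s \<alpha> \<xi> c \<le> ennreal C"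
proof -
  define n where "n = DIM('a) - 1"
  define p where "p = 2 * s / real n"
  define q where "q = (2 * \<alpha> - 1) / real n"  \<comment> \<open>so that the powers of 1 + |\<xi>| cancel\<close>
  have n: "0 < real n" "real DIM('a) = real n + 1"
    using d by (auto simp: n_def)
  have p: "0 \<le> p" "p * (real DIM('a) - 1) = 2 * s"
    using s n by (auto simp: p_def)
  have "1 - p = (real n - 2 * s) / real n"
    using n by (simp add: p_def field_simps)
  also have "\<dots> \<le> q"
    unfolding q_def using n s\<alpha> by (intro divide_right_mono) auto
  finally have q: "1 - p \<le> q" "0 < q" "1 - 2 * \<alpha> + q * real n = 0"
    using \<alpha> n by (auto simp: q_def)
  obtain C1 where C1: "\<And>N a c. 0 \<le> N \<Longrightarrow> 2*N / sqrt (real DIM('a)) \<le> \<bar>a\<bar> \<Longrightarrow> \<bar>a\<bar> \<le> 2*N \<Longrightarrow>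
      (\<integral>\<^sup>+y. ennreal ((1 + \<bar>c + a * y\<bar>) powr (-\<alpha>)) * indicator {-N..N} y \<partial>lborel)
        \<le> ennreal (C1 * (1+N) powr (1 - 2*\<alpha>))"
    using nn_integral_powr_affine_Icc_decay[of "sqrt (real DIM('a))" \<alpha>] \<alpha> d by auto
  show ?thesis
  proof (rule that)
    fix \<xi> :: 'a and c :: real
    define M where "M = 1 + norm \<xi>"
    have M: "0 < M"
      by (simp add: M_def add_pos_nonneg)
    have "Theta1_reduced s \<alpha> \<xi> c \<le> ennreal (C1 * M powr (1 - 2*\<alpha>)) * ennreal (2 * M powr q / q) ^ n"
      unfolding M_def n_def by (rule Theta1_reduced_le_powr[OF p q(2,1) C1])
    also have "\<dots> = ennreal (C1 * M powr (1 - 2*\<alpha>) * (2 * M powr q / q) ^ n)"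
      using q by (simp add: ennreal_power ennreal_mult'')
    also have "(2 * M powr q / q) ^ n = (2/q) ^ n * M powr (q * real n)"
    proof -
      have pow: "(M powr q) ^ n = M powr (q * real n)"
        using M by (subst powr_power) (auto simp: mult.commute)
      show ?thesis
        unfolding pow[symmetric] by (simp add: power_mult_distrib power_divide)
    qed
    also have "C1 * M powr (1 - 2*\<alpha>) * ((2/q) ^ n * M powr (q * real n))
        = C1 * (2/q) ^ n * M powr (1 - 2*\<alpha> + q * real n)"
      by (simp add: powr_add)
    finally show "Theta1_reduced s \<alpha> \<xi> c \<le> ennreal (C1 * (2/q) ^ n)"
      using q M by simp
  qed
qed

lemma exists_admissible_epsilon:
  fixes d s b' :: real
  assumes "3/8 < b'" "d/8 + 1/4 - s/4 < b'" "b' < 1/2"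
  obtains \<epsilon> where "0 < \<epsilon>" "1/2 < 4*b' - 1 - \<epsilon>" "4*b' - 1 - \<epsilon> < 1"
    "d \<le> 2 * s + 2 * (4*b' - 1 - \<epsilon>)"
proof
  define m where "m = min (4*b' - 3/2) (4*b' - 1 - d/2 + s)"
  have "0 < m" "m \<le> 4*b' - 3/2" "m \<le> 4*b' - 1 - d/2 + s"
    using assms by (simp_all add: m_def)
  then show "0 < m/2" "1/2 < 4*b' - 1 - m/2" "4*b' - 1 - m/2 < 1" "d \<le> 2 * s + 2 * (4*b' - 1 - m/2)"
    using assms by simp_all
qed

lemma Theta1_le_Theta1_reduced:
  fixes \<xi> :: "real ^ 'n" and s b' \<tau> \<alpha> \<epsilon> :: real
  assumes \<alpha>: "0 \<le> \<alpha>" "\<alpha> = 4*b' - 1 - \<epsilon>" and b': "2*b' < 1 + \<epsilon>" and \<epsilon>: "0 < \<epsilon>"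
  shows "Theta1 s b' \<xi> \<tau> \<le> ennreal (2 powr \<alpha> * (4/\<epsilon>)) * Theta1_reduced s \<alpha> \<xi> (\<tau> + (norm \<xi>)\<^sup>2)"
proof -
  define X where "X \<zeta> = indicator {\<zeta>'. norm \<zeta>' \<le> norm \<xi>} \<zeta> * (1 + norm \<zeta>) powr (- 2 * s)" for \<zeta> :: "real ^ 'n"
  define F where "F \<zeta> t = 1 / ((1 + \<bar>t + (norm \<zeta>)\<^sup>2\<bar>) powr (2*b') * (1 + \<bar>t + (\<tau> + (norm (\<xi> + \<zeta>))\<^sup>2)\<bar>) powr (2*b'))"
    for \<zeta> :: "real ^ 'n" and t
  define K where "K = 2 powr \<alpha> * (4/\<epsilon>)"
  have X: "0 \<le> X \<zeta>" for \<zeta>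
    by (simp add: X_def)
  have K: "0 \<le> K"
    using \<epsilon> by (simp add: K_def)
  have "Theta1 s b' \<xi> \<tau> = (\<integral>\<^sup>+\<zeta>. (\<integral>\<^sup>+t. ennreal (X \<zeta>) * ennreal (F \<zeta> t) \<partial>lborel) \<partial>lborel)"
    unfolding Theta1_def lborel_prod[symmetric] using X
    by (subst lborel.nn_integral_fst[symmetric]) (auto simp: X_def F_def add_ac simp flip: ennreal_mult')
  also have "\<dots> \<le> (\<integral>\<^sup>+\<zeta>. ennreal K * ennreal (X \<zeta> * (1 + \<bar>(\<tau> + (norm \<xi>)\<^sup>2) + 2 * (\<xi> \<bullet> \<zeta>)\<bar>) powr (-\<alpha>)) \<partial>lborel)"
  proof (intro nn_integral_mono)
    fix \<zeta> :: "real ^ 'n"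
    have "(norm (\<xi> + \<zeta>))\<^sup>2 = (norm \<xi>)\<^sup>2 + 2 * (\<xi> \<bullet> \<zeta>) + (norm \<zeta>)\<^sup>2"
      by (simp add: power2_norm_eq_inner inner_add_left inner_add_right inner_commute)
    then have diff: "\<bar>(norm \<zeta>)\<^sup>2 - (\<tau> + (norm (\<xi> + \<zeta>))\<^sup>2)\<bar> = \<bar>(\<tau> + (norm \<xi>)\<^sup>2) + 2 * (\<xi> \<bullet> \<zeta>)\<bar>"
      by simp
    have "(\<integral>\<^sup>+t. ennreal (X \<zeta>) * ennreal (F \<zeta> t) \<partial>lborel) = ennreal (X \<zeta>) * (\<integral>\<^sup>+t. ennreal (F \<zeta> t) \<partial>lborel)"
      by (rule nn_integral_cmult) (simp add: F_def)
    also have "\<dots> \<le> ennreal (X \<zeta>) * ennreal (K * (1 + \<bar>(\<tau> + (norm \<xi>)\<^sup>2) + 2 * (\<xi> \<bullet> \<zeta>)\<bar>) powr (-\<alpha>))"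
      using nn_integral_powr_product_le[OF \<alpha>(1) _ b' \<epsilon>, of "(norm \<zeta>)\<^sup>2" "\<tau> + (norm (\<xi> + \<zeta>))\<^sup>2"] \<alpha>(2)
      by (intro mult_left_mono) (auto simp: F_def K_def diff mult_ac)
    also have "\<dots> = ennreal K * ennreal (X \<zeta> * (1 + \<bar>(\<tau> + (norm \<xi>)\<^sup>2) + 2 * (\<xi> \<bullet> \<zeta>)\<bar>) powr (-\<alpha>))"
      using X K by (simp add: mult_ac flip: ennreal_mult)
    finally show "(\<integral>\<^sup>+t. ennreal (X \<zeta>) * ennreal (F \<zeta> t) \<partial>lborel)
      \<le> ennreal K * ennreal (X \<zeta> * (1 + \<bar>(\<tau> + (norm \<xi>)\<^sup>2) + 2 * (\<xi> \<bullet> \<zeta>)\<bar>) powr (-\<alpha>))" .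
  qed
  also have "\<dots> = ennreal K * Theta1_reduced s \<alpha> \<xi> (\<tau> + (norm \<xi>)\<^sup>2)"
    unfolding Theta1_reduced_def X_def by (subst nn_integral_cmult) (auto simp: mult.assoc)
  finally show ?thesis
    by (simp add: K_def)
qed

theorem lemma6p2:
  fixes s b' :: real
  assumes "CARD('n::finite) \<ge> 2"
    and "s > real CARD('n) / 2 - 1"
    and "max (3/8) (real CARD('n) / 8 + 1/4 - s / 4) < b'"
    and "b' < 1/2"
  shows "\<exists>C::real. \<forall>(\<xi>::real ^ 'n) (\<tau>::real). Theta1 s b' \<xi> \<tau> \<le> ennreal C"
proof -
  obtain \<epsilon> where \<epsilon>: "0 < \<epsilon>" "1/2 < 4*b' - 1 - \<epsilon>" "4*b' - 1 - \<epsilon> < 1"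
      "real CARD('n) \<le> 2 * s + 2 * (4*b' - 1 - \<epsilon>)"
    using exists_admissible_epsilon[of b' "real CARD('n)" s] assms(3,4) by auto
  define \<alpha> where "\<alpha> = 4*b' - 1 - \<epsilon>"
  obtain C where C: "\<And>(\<xi>::real ^ 'n) c. Theta1_reduced s \<alpha> \<xi> c \<le> ennreal C"
    using Theta1_reduced_bounded[where 'a = "real ^ 'n", of s \<alpha>] assms(1,2) \<epsilon> by (auto simp: \<alpha>_def)
  show ?thesis
  proof (intro exI allI)
    fix \<xi> :: "real ^ 'n" and \<tau> :: real
    have "Theta1 s b' \<xi> \<tau> \<le> ennreal (2 powr \<alpha> * (4/\<epsilon>)) * Theta1_reduced s \<alpha> \<xi> (\<tau> + (norm \<xi>)\<^sup>2)"
      using \<epsilon> assms(4) by (intro Theta1_le_Theta1_reduced) (auto simp: \<alpha>_def)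
    also have "\<dots> \<le> ennreal (2 powr \<alpha> * (4/\<epsilon>)) * ennreal C"
      by (intro mult_left_mono C) simp
    also have "\<dots> = ennreal (2 powr \<alpha> * (4/\<epsilon>) * C)"
      using \<epsilon> by (intro ennreal_mult'[symmetric]) simp
    finally show "Theta1 s b' \<xi> \<tau> \<le> ennreal (2 powr \<alpha> * (4/\<epsilon>) * C)" .
  qed
qed

end
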